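(* Let $m$ be an integer and $\alpha\in(\frac12,\frac23)$. For an integer $N\ge 2$ let $v=e^{\pi i/N}$, $q^{1/8}=e^{\pi i/(4N)}$ (so $q^{mj^2/8}=\exp(\pi i m j^2/(4N))$), $\{n\}=v^n-v^{-n}$, $A(j,k)=\{j-k\}\{j+k\}$, $S(k,l)=\prod_{k\le n\le l}\{n\}$, and for $0\le l<j<N/2$ $$D_1(j,l)=\Big(\frac{mj}{2}+\frac{v^j+v^{-j}}{\{j\}}+2\{2j\}\sum_{k=1}^l\frac{1}{A(j,k)}\Big)S(j-l,j+l).$$ Let $F_N=\big(\prod_{r=1}^{\lfloor 5N/6\rfloor}2\sin\frac{r\pi}{N}\big)\big/\big(\prod_{r=1}^{\lfloor N/6\rfloor-1}2\sin\frac{r\pi}{N}\big)$. Then, as $N\to\infty$, $$\sum_{\substack{1\le j\le N/2-1\\ N-j+1\ \text{even}}}\ \sum_{l=0}^{j-1} q^{mj^2/8}D_1(j,l) = O\big(N^{3\alpha}F_N\big).$$ *)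

theory Defs
  imports "HOL-Analysis.Analysis" "HOL-Library.Landau_Symbols"
begin

definition vv :: "nat \<Rightarrow> complex" where
  "vv N = exp (pi * \<i> / of_nat N)"

definition br :: "nat \<Rightarrow> int \<Rightarrow> complex" where
  "br N n = vv N powi n - vv N powi (- n)"

definition AA :: "nat \<Rightarrow> int \<Rightarrow> int \<Rightarrow> complex" where
  "AA N j k = br N (j - k) * br N (j + k)"

definition SS :: "nat \<Rightarrow> int \<Rightarrow> int \<Rightarrow> complex" where
  "SS N k l = (\<Prod>n\<in>{k..l}. br N n)"

definition D1 :: "int \<Rightarrow> nat \<Rightarrow> int \<Rightarrow> int \<Rightarrow> complex" where
  "D1 m N j l =
     (of_int m * of_int j / 2 + (vv N powi j + vv N powi (- j)) / br N j
      + 2 * br N (2 * j) * (\<Sum>k\<in>{1..l}. 1 / AA N j k))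
     * SS N (j - l) (j + l)"

definition qterm :: "int \<Rightarrow> nat \<Rightarrow> int \<Rightarrow> complex" where
  "qterm m N j = exp (pi * \<i> * of_int m * of_int (j ^ 2) / (4 * of_nat N))"

definition FF :: "nat \<Rightarrow> real" where
  "FF N = (\<Prod>r\<in>{1..(5 * N) div 6}. 2 * sin (real r * pi / real N))
          / (\<Prod>r\<in>{1..N div 6 - 1}. 2 * sin (real r * pi / real N))"

definition Ssum :: "int \<Rightarrow> nat \<Rightarrow> complex" where
  "Ssum m N = (\<Sum>j\<in>{j::int. 1 \<le> j \<and> real_of_int j \<le> real N / 2 - 1 \<and> even (int N - j + 1)}.
                 \<Sum>l\<in>{0..j-1}. qterm m N j * D1 m N j l)"

end

theory Submission
  imports Defs "HOL-Real_Asymp.Real_Asymp"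
begin

text \<open>With \<open>v = exp(\<pi> i/N)\<close> every bracket is \<open>{n} = 2 i sin(n\<pi>/N)\<close>, so \<open>S(j-l, j+l)\<close> is, up
  to a power of \<open>i\<close>, a product of chords \<open>2 sin(n\<pi>/N)\<close>. These chords are at least 1 exactly
  for \<open>N/6 \<le> n \<le> 5N/6\<close>, where their product is \<open>F\<^sub>N\<close>; hence every such product is at most
  \<open>2 F\<^sub>N\<close>, and it is smaller by a factor \<open>exp(-c W\<^sup>2/N)\<close> unless its ends lie within
  \<open>W = N\<^sup>\<alpha>\<close> of \<open>N/6\<close> and \<open>5N/6\<close>. As \<open>\<alpha> > 1/2\<close>, this factor beats every power of \<open>N\<close>, so
  only the \<open>O(W\<^sup>2)\<close> pairs \<open>(j,l)\<close> in this window matter. There the prefactor of \<open>S\<close> in \<open>D\<^sub>1\<close>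
  is \<open>m j/2 - i c(j,l)\<close> with a real cotangent sum \<open>c(j,l) = O(W)\<close>, and the alternating sum
  over \<open>l\<close> of the products is controlled, after summing by parts twice, by second differences
  of size \<open>O(W F\<^sub>N/N)\<close>, because all chords at the ends of the window are close to 1.
  Altogether the sum is \<open>O(W\<^sup>3 F\<^sub>N) = O(N\<^sup>3\<^sup>\<alpha> F\<^sub>N)\<close>.\<close>

lemma sin_ge_cubic:
  fixes t :: real assumes "0 \<le> t" shows "t - t ^ 3 / 6 \<le> sin t"
proof -
  have "\<bar>sin t - (\<Sum>m<3. sin_coeff m * t ^ m)\<bar> \<le> inverse (fact 3) * \<bar>t\<bar> ^ 3"
    by (rule Maclaurin_sin_bound)
  moreover have "(\<Sum>m<3. sin_coeff m * t ^ m) = t"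
    by (simp add: numeral_3_eq_3 sin_coeff_def)
  ultimately show ?thesis
    using assms by (simp add: fact_numeral abs_if split: if_splits)
qed

lemma cos_ge_quadratic:
  fixes t :: real shows "1 - t ^ 2 / 2 \<le> cos t"
proof -
  have "sin (t / 2) ^ 2 \<le> (t / 2) ^ 2"
    using abs_sin_x_le_abs_x[of "t / 2"] by (metis abs_le_square_iff)
  moreover have "cos t = 1 - 2 * sin (t / 2) ^ 2"
    using cos_double_sin[of "t / 2"] by simp
  ultimately show ?thesis by (simp add: power_divide)
qed

lemma abs_sin_diff_le:
  fixes u v :: real shows "\<bar>sin u - sin v\<bar> \<le> \<bar>u - v\<bar>"
proof -
  have "\<bar>sin u - sin v\<bar> = 2 * \<bar>sin ((u - v) / 2)\<bar> * \<bar>cos ((u + v) / 2)\<bar>"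
    by (simp add: sin_diff_sin abs_mult)
  also have "\<dots> \<le> 2 * \<bar>(u - v) / 2\<bar> * 1"
    by (intro mult_mono abs_sin_x_le_abs_x) auto
  finally show ?thesis by simp
qed

lemma sin_le_sin_between:
  fixes u v :: real assumes "0 \<le> v" "v \<le> u" "u \<le> pi - v" shows "sin v \<le> sin u"
proof (cases "u \<le> pi / 2")
  case True
  then show ?thesis using assms by (intro sin_monotone_2pi_le) auto
next
  case False
  have "sin v \<le> sin (pi - u)" using assms False by (intro sin_monotone_2pi_le) auto
  then show ?thesis by simp
qed

lemma sin_le_sin_outside:
  fixes u v :: real
  assumes "0 \<le> u" "u \<le> pi" "v \<le> pi / 2" "u \<le> v \<or> pi - v \<le> u"
  shows "sin u \<le> sin v"
  using assms(4)
proof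
  assume "u \<le> v"
  then show ?thesis using assms by (intro sin_monotone_2pi_le) auto
next
  assume "pi - v \<le> u"
  then have "sin (pi - u) \<le> sin v" using assms by (intro sin_monotone_2pi_le) auto
  then show ?thesis by simp
qed

text \<open>Near \<open>\<pi>/6\<close> the function \<open>2 sin\<close> has slope \<open>\<surd>3 > 1\<close>.\<close>

lemma sin_pi_sixth_add_sub_bounds:
  fixes t :: real assumes t: "0 \<le> t" "t \<le> 1 / 2"
  shows "1 + t \<le> 2 * sin (pi / 6 + t)" and "2 * sin (pi / 6 - t) \<le> 1 - t"
proof -
  have sqrt3: "1.7 \<le> sqrt (3 :: real)"
    by (rule real_le_rsqrt) (simp add: power2_eq_square)
  have t3: "t ^ 3 \<le> t / 4"
  proof -
    have "t * (t * t) \<le> t * (1 / 2 * (1 / 2))"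
      using t by (intro mult_left_mono mult_mono) auto
    then show ?thesis by (simp add: power3_eq_cube)
  qed
  have t2: "t ^ 2 \<le> t / 2"
    using mult_left_mono[OF t(2) t(1)] by (simp add: power2_eq_square)
  have slope: "t + t ^ 2 / 2 \<le> sqrt 3 * sin t"
  proof -
    have "1.7 * (t - t ^ 3 / 6) \<le> sqrt 3 * (t - t ^ 3 / 6)"
      using sqrt3 t3 t by (intro mult_right_mono) auto
    also have "\<dots> \<le> sqrt 3 * sin t" using sin_ge_cubic[OF t(1)] by simp
    finally have "17 / 10 * t - 17 / 60 * t ^ 3 \<le> sqrt 3 * sin t" by simp
    then show ?thesis using t2 t3 t by linarith
  qed
  have "2 * sin (pi / 6 + t) = cos t + sqrt 3 * sin t"
    by (simp add: sin_add sin_30 cos_30)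
  then show "1 + t \<le> 2 * sin (pi / 6 + t)"
    using cos_ge_quadratic[of t] slope by linarith
  have "2 * sin (pi / 6 - t) = cos t - sqrt 3 * sin t"
    by (simp add: sin_diff sin_30 cos_30)
  then show "2 * sin (pi / 6 - t) \<le> 1 - t"
    using cos_le_one[of t] slope zero_le_power2[of t] by linarith
qed

lemma sin_ge_quarter:
  fixes u :: real assumes "pi / 12 \<le> u" "u \<le> 11 * pi / 12" shows "1 / 4 \<le> sin u"
proof -
  have "sin (pi / 12) \<le> sin u" using assms by (intro sin_le_sin_between) auto
  moreover have "pi / 12 - (pi / 12) ^ 3 / 6 \<le> sin (pi / 12)" by (rule sin_ge_cubic) simp
  moreover have "(pi / 12) ^ 3 \<le> (1 / 3) ^ 3" using pi_less_4 by (intro power_mono) auto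
  moreover have "1 / 4 + 1 / 162 \<le> pi / 12" using pi_approx(1) by simp
  ultimately show ?thesis by (simp add: power_divide)
qed

lemma one_sub_power_le_inverse:
  fixes t :: real assumes "0 \<le> t" "t \<le> 1" shows "(1 - t) ^ k \<le> 1 / (1 + t) ^ k"
proof -
  have "(1 - t) ^ k * (1 + t) ^ k = (1 - t * t) ^ k"
    by (simp add: power_mult_distrib[symmetric] algebra_simps)
  also have "\<dots> \<le> 1" using assms by (intro power_le_one) (auto simp: mult_le_one)
  finally show ?thesis using assms by (simp add: field_simps)
qed

text \<open>Summation by parts twice: an alternating sum is controlled by its four extreme terms and
  the second differences.\<close>

lemma alternating_sum_second_differences:
  fixes x :: "nat \<Rightarrow> real"
  shows "4 * (\<Sum>l<n + 2. (-1) ^ l * x l) = 2 * x 0 + 2 * (-1) ^ (n + 1) * x (n + 1) + (x 0 - x 1)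
     + (-1) ^ n * (x n - x (n + 1)) + (\<Sum>l<n. (-1) ^ l * (x l - 2 * x (Suc l) + x (Suc (Suc l))))"
  by (induction n) (simp_all add: numeral_2_eq_2 algebra_simps)

lemma abs_alternating_sum_le:
  fixes x :: "nat \<Rightarrow> real"
  assumes M: "\<And>l. l < n \<Longrightarrow> l \<le> 1 \<or> n \<le> l + 2 \<Longrightarrow> \<bar>x l\<bar> \<le> M" and "0 \<le> M"
  shows "\<bar>\<Sum>l<n. (-1) ^ l * x l\<bar> \<le> 4 * M + (\<Sum>l<n - 2. \<bar>x l - 2 * x (Suc l) + x (Suc (Suc l))\<bar>)"
proof (cases "n < 2")
  case True
  then have "n = 0 \<or> n = 1" by auto
  then show ?thesis using M[of 0] \<open>0 \<le> M\<close> by auto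
next
  case False
  then obtain k where k: "n = k + 2" by (metis add.commute le_add_diff_inverse not_less)
  have ends: "\<bar>x 0\<bar> \<le> M" "\<bar>x 1\<bar> \<le> M" "\<bar>x k\<bar> \<le> M" "\<bar>x (k + 1)\<bar> \<le> M"
    using M k by auto
  let ?D = "\<Sum>l<k. \<bar>x l - 2 * x (Suc l) + x (Suc (Suc l))\<bar>"
  have D: "\<bar>\<Sum>l<k. (-1) ^ l * (x l - 2 * x (Suc l) + x (Suc (Suc l)))\<bar> \<le> ?D"
    by (rule order_trans[OF sum_abs]) (simp add: abs_mult)
  have triangle: "\<bar>A + B + C + D + E\<bar> \<le> \<bar>A\<bar> + \<bar>B\<bar> + \<bar>C\<bar> + \<bar>D\<bar> + \<bar>E\<bar>" for A B C D E :: real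
    by linarith
  have "\<bar>4 * (\<Sum>l<k + 2. (-1) ^ l * x l)\<bar>
      \<le> \<bar>2 * x 0\<bar> + \<bar>2 * (-1) ^ (k + 1) * x (k + 1)\<bar> + \<bar>x 0 - x 1\<bar>
        + \<bar>(-1) ^ k * (x k - x (k + 1))\<bar>
        + \<bar>\<Sum>l<k. (-1) ^ l * (x l - 2 * x (Suc l) + x (Suc (Suc l)))\<bar>"
    unfolding alternating_sum_second_differences by (rule triangle)
  moreover have "\<bar>2 * (-1) ^ (k + 1) * x (k + 1)\<bar> = 2 * \<bar>x (k + 1)\<bar>"
    and "\<bar>(-1) ^ k * (x k - x (k + 1))\<bar> = \<bar>x k - x (k + 1)\<bar>"
    by (simp_all add: abs_mult)
  moreover have "\<bar>4 * (\<Sum>l<k + 2. (-1) ^ l * x l)\<bar> = 4 * \<bar>\<Sum>l<k + 2. (-1) ^ l * x l\<bar>"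
    and "\<bar>2 * x 0\<bar> = 2 * \<bar>x 0\<bar>"
    by (simp_all only: abs_mult abs_numeral)
  ultimately have "4 * \<bar>\<Sum>l<k + 2. (-1) ^ l * x l\<bar>
      \<le> 2 * \<bar>x 0\<bar> + 2 * \<bar>x (k + 1)\<bar> + \<bar>x 0 - x 1\<bar> + \<bar>x k - x (k + 1)\<bar> + ?D"
    using D by linarith
  then have "4 * \<bar>\<Sum>l<k + 2. (-1) ^ l * x l\<bar> \<le> 16 * M + ?D"
    using ends by linarith
  moreover have "0 \<le> ?D" by (simp add: sum_nonneg)
  ultimately have "\<bar>\<Sum>l<k + 2. (-1) ^ l * x l\<bar> \<le> 4 * M + ?D" by linarith
  then show ?thesis unfolding k by simp
qed

lemma abs_second_difference_factor_le:
  fixes X1 Y1 X2 Y2 e h :: real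
  assumes "\<bar>X1\<bar> \<le> 2" "\<bar>Y1\<bar> \<le> 2" "\<bar>X2\<bar> \<le> 2"
    and "\<bar>1 - X1\<bar> \<le> e" "\<bar>1 - Y1\<bar> \<le> e" and "\<bar>X2 - X1\<bar> \<le> h" "\<bar>Y2 - Y1\<bar> \<le> h"
  shows "\<bar>1 - 2 * (X1 * Y1) + (X1 * Y1) * (X2 * Y2)\<bar> \<le> 9 * e ^ 2 + 16 * h"
proof -
  let ?r1 = "X1 * Y1" and ?r2 = "X2 * Y2"
  have "1 - ?r1 = (1 - Y1) + Y1 * (1 - X1)" by (simp add: algebra_simps)
  then have "\<bar>1 - ?r1\<bar> \<le> \<bar>1 - Y1\<bar> + \<bar>Y1\<bar> * \<bar>1 - X1\<bar>"
    by (metis abs_mult abs_triangle_ineq)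
  also have "\<dots> \<le> e + 2 * e" using assms by (intro add_mono mult_mono) auto
  finally have "\<bar>1 - ?r1\<bar> ^ 2 \<le> (3 * e) ^ 2"
    by (intro power_mono) auto
  then have sq: "(1 - ?r1) ^ 2 \<le> (3 * e) ^ 2" by simp
  have "?r2 - ?r1 = X2 * (Y2 - Y1) + Y1 * (X2 - X1)" by (simp add: algebra_simps)
  then have "\<bar>?r2 - ?r1\<bar> \<le> \<bar>X2\<bar> * \<bar>Y2 - Y1\<bar> + \<bar>Y1\<bar> * \<bar>X2 - X1\<bar>"
    by (metis abs_mult abs_triangle_ineq)
  then have "\<bar>?r2 - ?r1\<bar> \<le> 4 * h"
    using mult_mono[of "\<bar>X2\<bar>" 2 "\<bar>Y2 - Y1\<bar>" h] mult_mono[of "\<bar>Y1\<bar>" 2 "\<bar>X2 - X1\<bar>" h] assms by linarith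
  moreover have "\<bar>X1\<bar> * \<bar>Y1\<bar> \<le> 2 * 2" using assms by (intro mult_mono) auto
  ultimately have "\<bar>?r1 * (?r2 - ?r1)\<bar> \<le> 4 * (4 * h)"
    unfolding abs_mult by (intro mult_mono) auto
  moreover have "1 - 2 * ?r1 + ?r1 * ?r2 = (1 - ?r1) ^ 2 + ?r1 * (?r2 - ?r1)"
    by (simp add: algebra_simps power2_eq_square)
  moreover have "\<bar>(1 - ?r1) ^ 2 + ?r1 * (?r2 - ?r1)\<bar> \<le> (1 - ?r1) ^ 2 + \<bar>?r1 * (?r2 - ?r1)\<bar>"
    using abs_triangle_ineq[of "(1 - ?r1) ^ 2" "?r1 * (?r2 - ?r1)"] by simp
  moreover have "(3 * e) ^ 2 = 9 * e ^ 2" by (simp add: power_mult_distrib)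
  ultimately show ?thesis using sq by linarith
qed

lemma sum_if_le_card:
  assumes "0 \<le> B"
  shows "(\<Sum>l<n. if P l then A else B) \<le> A * real (card {l. l < n \<and> P l}) + B * real n"
proof -
  have "(\<Sum>l<n. if P l then A else B) = (\<Sum>l\<in>{..<n} \<inter> {l. P l}. A) + (\<Sum>l\<in>{..<n} \<inter> - {l. P l}. B)"
    by (rule sum.If_cases) simp
  moreover have "{..<n} \<inter> {l. P l} = {l. l < n \<and> P l}" by auto
  moreover have "card ({..<n} \<inter> - {l. P l}) \<le> n"
    using card_mono[of "{..<n}" "{..<n} \<inter> - {l. P l}"] by auto
  ultimately show ?thesis
    using mult_right_mono[of "real (card ({..<n} \<inter> - {l. P l}))" "real n" B] assms
    by (simp add: mult.commute)
qed

lemma sum_int_atLeastAtMost_eq_sum_lessThan: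
  assumes "0 \<le> j" shows "(\<Sum>l\<in>{0..j-1}. f l) = (\<Sum>l<nat j. f (int l))"
proof -
  have "{0..j-1} = int ` {..<nat j}"
    using assms by (auto simp: image_iff intro!: bexI[where x = "nat _"])
  then show ?thesis by (simp add: sum.reindex)
qed

lemma card_int_set_le:
  fixes S :: "int set"
  assumes S: "\<And>n. n \<in> S \<Longrightarrow> x \<le> real_of_int n \<and> real_of_int n \<le> x + w" and "0 \<le> w"
  shows "real (card S) \<le> w + 1"
proof -
  have "S \<subseteq> {\<lceil>x\<rceil>..\<lfloor>x + w\<rfloor>}"
    using S by (auto simp: ceiling_le_iff le_floor_iff)
  then have "card S \<le> nat (\<lfloor>x + w\<rfloor> - \<lceil>x\<rceil> + 1)"
    using card_mono[of "{\<lceil>x\<rceil>..\<lfloor>x + w\<rfloor>}" S] by simp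
  moreover have "real_of_int \<lfloor>x + w\<rfloor> \<le> x + w" "x \<le> real_of_int \<lceil>x\<rceil>"
    by (rule of_int_floor_le, rule le_of_int_ceiling)
  ultimately show ?thesis using \<open>0 \<le> w\<close> by linarith
qed

section \<open>Chords of the regular \<open>N\<close>-gon\<close>

definition chord :: "nat \<Rightarrow> real \<Rightarrow> real" where
  "chord N x = 2 * sin (x * pi / real N)"

lemma scaled_angle_le_iff:
  assumes "N > 0" shows "x * pi / real N \<le> y * pi / real N \<longleftrightarrow> x \<le> y"
  using assms by (simp add: divide_le_cancel)

lemma abs_chord_le: "\<bar>chord N x\<bar> \<le> 2"
  unfolding chord_def by (simp add: abs_mult)

lemma chord_lipschitz:
  assumes "N > 0" shows "\<bar>chord N x - chord N y\<bar> \<le> 2 * pi * \<bar>x - y\<bar> / real N"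
proof -
  have "\<bar>chord N x - chord N y\<bar> = 2 * \<bar>sin (x * pi / real N) - sin (y * pi / real N)\<bar>"
    unfolding chord_def right_diff_distrib[symmetric] abs_mult by simp
  also have "\<dots> \<le> 2 * \<bar>x * pi / real N - y * pi / real N\<bar>"
    using abs_sin_diff_le by simp
  also have "x * pi / real N - y * pi / real N = (x - y) * (pi / real N)"
    by (simp add: left_diff_distrib diff_divide_distrib)
  also have "2 * \<bar>(x - y) * (pi / real N)\<bar> = 2 * pi * \<bar>x - y\<bar> / real N"
    by (simp add: abs_mult)
  finally show ?thesis .
qed

lemma chord_pos:
  assumes "0 < x" "x < real N" shows "0 < chord N x"
proof -
  have "x * pi / real N < real N * pi / real N"
    using assms by (intro divide_strict_right_mono mult_strict_right_mono) auto
  then show ?thesis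
    using assms unfolding chord_def by (intro mult_pos_pos sin_gt_zero) auto
qed

lemma scaled_angle_between_0_pi:
  assumes "0 \<le> x" "x \<le> real N" shows "0 \<le> x * pi / real N" "x * pi / real N \<le> pi"
proof -
  show "0 \<le> x * pi / real N" using assms by simp
  have "x * pi / real N \<le> real N * pi / real N"
    using assms by (intro divide_right_mono mult_right_mono) auto
  then show "x * pi / real N \<le> pi" by (cases "N = 0") auto
qed

lemma chord_nonneg:
  assumes "0 \<le> x" "x \<le> real N" shows "0 \<le> chord N x"
  using scaled_angle_between_0_pi[OF assms] unfolding chord_def by (simp add: sin_ge_zero)

lemma chord_sixth: "N > 0 \<Longrightarrow> chord N (real N / 6) = 1"
  unfolding chord_def by (simp add: sin_30)

lemma chord_five_sixths: "N > 0 \<Longrightarrow> chord N (5 * real N / 6) = 1"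
  using sin_pi_minus[of "pi / 6"] unfolding chord_def by (simp add: sin_30)

lemma one_add_le_chord:
  assumes N: "N > 0" and d: "0 \<le> d" "d * pi / real N \<le> 1 / 2"
    and x: "real N / 6 + d \<le> x" "x \<le> 5 * real N / 6 - d"
  shows "1 + d * pi / real N \<le> chord N x"
proof -
  let ?t = "d * pi / real N"
  have lo: "pi / 6 + ?t = (real N / 6 + d) * pi / real N"
    and hi: "pi - (real N / 6 + d) * pi / real N = (5 * real N / 6 - d) * pi / real N"
    using N by (simp_all add: field_simps)
  have "sin (pi / 6 + ?t) \<le> sin (x * pi / real N)"
    by (rule sin_le_sin_between) (use d N x in \<open>simp_all only: lo hi scaled_angle_le_iff\<close>, simp)
  with sin_pi_sixth_add_sub_bounds(1)[of ?t] d N show ?thesis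
    unfolding chord_def by simp
qed

lemma chord_le_one_sub:
  assumes N: "N > 0" and d: "0 \<le> d" "d * pi / real N \<le> 1 / 2"
    and x: "0 \<le> x" "x \<le> real N" "x \<le> real N / 6 - d \<or> 5 * real N / 6 + d \<le> x"
  shows "chord N x \<le> 1 - d * pi / real N"
proof -
  let ?t = "d * pi / real N"
  have t0: "0 \<le> ?t" using d by simp
  have lo: "pi / 6 - ?t = (real N / 6 - d) * pi / real N"
    and hi: "pi - (real N / 6 - d) * pi / real N = (5 * real N / 6 + d) * pi / real N"
    using N by (simp_all add: field_simps)
  have "sin (x * pi / real N) \<le> sin (pi / 6 - ?t)"
  proof (rule sin_le_sin_outside)
    show "0 \<le> x * pi / real N" "x * pi / real N \<le> pi"
      using scaled_angle_between_0_pi[OF x(1,2)] by simp_all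
    show "pi / 6 - ?t \<le> pi / 2" using t0 pi_gt_zero by linarith
    show "x * pi / real N \<le> pi / 6 - ?t \<or> pi - (pi / 6 - ?t) \<le> x * pi / real N"
      using x(3) N by (simp only: lo hi scaled_angle_le_iff)
  qed
  moreover have "2 * sin (pi / 6 - ?t) \<le> 1 - ?t"
    using t0 d by (intro sin_pi_sixth_add_sub_bounds(2))
  ultimately show ?thesis unfolding chord_def by linarith
qed

lemma half_le_chord:
  assumes N: "N > 0" and x: "real N / 12 \<le> x" "x \<le> 11 * real N / 12"
  shows "1 / 2 \<le> chord N x"
proof -
  have "pi / 12 = (real N / 12) * pi / real N" "11 * pi / 12 = (11 * real N / 12) * pi / real N"
    using N by simp_all
  then have "1 / 4 \<le> sin (x * pi / real N)"
    using x N by (intro sin_ge_quarter) (simp_all only: scaled_angle_le_iff)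
  then show ?thesis unfolding chord_def by simp
qed

lemma chord_second_difference_factor_le:
  fixes N :: nat and x y :: real
  defines "r1 \<equiv> chord N (x - 1) * chord N (y + 1)" and "r2 \<equiv> chord N (x - 2) * chord N (y + 2)"
  shows "\<bar>1 - 2 * r1 + r1 * r2\<bar> \<le> 145"
proof -
  have "\<bar>1 - chord N z\<bar> \<le> 3" "\<bar>chord N z - chord N z'\<bar> \<le> 4" for z z'
    using abs_chord_le[of N z] abs_chord_le[of N z'] by linarith+
  then have "\<bar>1 - 2 * r1 + r1 * r2\<bar> \<le> 9 * 3 ^ 2 + 16 * 4"
    unfolding r1_def r2_def by (intro abs_second_difference_factor_le abs_chord_le)
  then show ?thesis by simp
qed

definition chord_prod :: "nat \<Rightarrow> int \<Rightarrow> int \<Rightarrow> real" where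
  "chord_prod N a b = (\<Prod>n\<in>{a..b}. chord N (of_int n))"

lemma chord_prod_nonneg:
  assumes "0 \<le> a" "b \<le> int N" shows "0 \<le> chord_prod N a b"
  unfolding chord_prod_def using assms by (intro prod_nonneg ballI chord_nonneg) auto

lemma chord_prod_expand:
  assumes "a \<le> b + 1"
  shows "chord_prod N (a - 1) (b + 1) = chord N (of_int (a - 1)) * chord_prod N a b * chord N (of_int (b + 1))"
proof -
  have "{a - 1..b + 1} = insert (a - 1) (insert (b + 1) {a..b})" using assms by auto
  then show ?thesis
    unfolding chord_prod_def using assms by (simp add: mult_ac)
qed

lemma chord_prod_second_difference_eq:
  assumes "a \<le> b + 1"
  shows "chord_prod N a b - 2 * chord_prod N (a - 1) (b + 1) + chord_prod N (a - 2) (b + 2)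
    = chord_prod N a b * (1 - 2 * (chord N (of_int a - 1) * chord N (of_int b + 1))
        + (chord N (of_int a - 1) * chord N (of_int b + 1)) * (chord N (of_int a - 2) * chord N (of_int b + 2)))"
proof -
  have "chord_prod N (a - 1 - 1) (b + 1 + 1) = chord N (of_int (a - 1 - 1)) * chord_prod N (a - 1) (b + 1)
      * chord N (of_int (b + 1 + 1))"
    using assms by (intro chord_prod_expand) simp
  moreover have "chord_prod N (a - 1) (b + 1) = chord N (of_int (a - 1)) * chord_prod N a b * chord N (of_int (b + 1))"
    using assms by (rule chord_prod_expand)
  ultimately show ?thesis by (simp add: algebra_simps)
qed

lemma chord_prod_mult_diff_eq:
  "chord_prod N a b * (\<Prod>n\<in>{c..d} - {a..b}. chord N (of_int n))
   = chord_prod N c d * (\<Prod>n\<in>{a..b} - {c..d}. chord N (of_int n))"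
proof -
  let ?s = "\<lambda>n::int. chord N (of_int n)"
  have "chord_prod N a b * prod ?s ({c..d} - {a..b}) = prod ?s ({a..b} \<union> ({c..d} - {a..b}))"
    unfolding chord_prod_def by (rule prod.union_disjoint[symmetric]) auto
  also have "{a..b} \<union> ({c..d} - {a..b}) = {c..d} \<union> ({a..b} - {c..d})" by auto
  also have "prod ?s \<dots> = chord_prod N c d * prod ?s ({a..b} - {c..d})"
    unfolding chord_prod_def by (rule prod.union_disjoint) auto
  finally show ?thesis .
qed

section \<open>Quantum brackets as chords\<close>

lemma vv_powi:
  assumes "N > 0" shows "vv N powi n = exp (\<i> * complex_of_real (real_of_int n * pi / real N))"
proof -
  have "vv N powi n = exp (of_int n * (complex_of_real pi * \<i> / of_nat N))"
    unfolding vv_def by (rule exp_power_int)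
  also have "of_int n * (complex_of_real pi * \<i> / of_nat N) = \<i> * complex_of_real (real_of_int n * pi / real N)"
    by (simp add: field_simps)
  finally show ?thesis .
qed

lemma exp_i_real_sub_add:
  fixes y :: real
  shows "exp (\<i> * complex_of_real y) - exp (\<i> * complex_of_real (- y)) = \<i> * complex_of_real (2 * sin y)"
    and "exp (\<i> * complex_of_real y) + exp (\<i> * complex_of_real (- y)) = complex_of_real (2 * cos y)"
  by (simp_all add: exp_Euler exp_minus_Euler cos_of_real sin_of_real)

lemma br_eq_chord:
  assumes "N > 0" shows "br N n = \<i> * complex_of_real (chord N (of_int n))"
  using exp_i_real_sub_add(1)[of "real_of_int n * pi / real N"]
  unfolding br_def vv_powi[OF assms] chord_def by simp

lemma vv_powi_add_powi_neg:
  assumes "N > 0"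
  shows "vv N powi j + vv N powi (- j) = complex_of_real (2 * cos (real_of_int j * pi / real N))"
  using exp_i_real_sub_add(2)[of "real_of_int j * pi / real N"]
  unfolding vv_powi[OF assms] by simp

lemma SS_eq_chord_prod:
  assumes "N > 0" "a \<le> b + 1"
  shows "SS N a b = \<i> ^ nat (b - a + 1) * complex_of_real (chord_prod N a b)"
  using assms unfolding SS_def chord_prod_def br_eq_chord[OF assms(1)]
  by (simp add: prod.distrib)

text \<open>The real number \<open>c(j,l)\<close> with \<open>D\<^sub>1(j,l) = (m j/2 - i c(j,l)) S(j-l,j+l)\<close>.\<close>

definition cot_sum :: "nat \<Rightarrow> int \<Rightarrow> int \<Rightarrow> real" where
  "cot_sum N j l = cot (real_of_int j * pi / real N)
     + (\<Sum>k\<in>{1..l}. sin (real_of_int (2 * j) * pi / real N)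
          / (sin (real_of_int (j - k) * pi / real N) * sin (real_of_int (j + k) * pi / real N)))"

lemma D1_prefactor_eq:
  assumes N: "N > 0"
  shows "of_int m * of_int j / 2 + (vv N powi j + vv N powi (- j)) / br N j
      + 2 * br N (2 * j) * (\<Sum>k\<in>{1..l}. 1 / AA N j k)
    = of_int m * of_int j / 2 - \<i> * complex_of_real (cot_sum N j l)"
proof -
  have div_i: "a / (\<i> * b) = - \<i> * (a / b)" for a b :: complex
    by (cases "b = 0") (auto simp: field_simps)
  have "(vv N powi j + vv N powi (- j)) / br N j
      = - \<i> * complex_of_real (cot (real_of_int j * pi / real N))"
    unfolding vv_powi_add_powi_neg[OF N] br_eq_chord[OF N] chord_def div_i cot_def by simp
  moreover have "2 * br N (2 * j) * (\<Sum>k\<in>{1..l}. 1 / AA N j k)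
      = - \<i> * complex_of_real (\<Sum>k\<in>{1..l}. sin (real_of_int (2 * j) * pi / real N)
          / (sin (real_of_int (j - k) * pi / real N) * sin (real_of_int (j + k) * pi / real N)))"
  proof -
    have "2 * br N (2 * j) * (1 / AA N j k)
        = - \<i> * complex_of_real (sin (real_of_int (2 * j) * pi / real N)
          / (sin (real_of_int (j - k) * pi / real N) * sin (real_of_int (j + k) * pi / real N)))" for k
      unfolding AA_def br_eq_chord[OF N] chord_def by (simp add: field_simps)
    then show ?thesis by (simp add: sum_distrib_left)
  qed
  ultimately show ?thesis
    unfolding cot_sum_def by (simp add: algebra_simps)
qed

lemma D1_eq:
  fixes m j l :: int
  assumes N: "N > 0" and l: "0 \<le> l"
  defines "x \<equiv> (-1) ^ nat l * chord_prod N (j - l) (j + l)"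
  shows "D1 m N j l = \<i> * complex_of_real (real_of_int m * real_of_int j / 2 * x)
      + complex_of_real (x * cot_sum N j l)"
proof -
  have "nat ((j + l) - (j - l) + 1) = Suc (2 * nat l)" using l by simp
  then have "SS N (j - l) (j + l) = \<i> * complex_of_real x"
    using l unfolding x_def by (simp add: SS_eq_chord_prod[OF N] power_mult)
  then show ?thesis
    unfolding D1_def D1_prefactor_eq[OF N] by (simp add: algebra_simps)
qed

lemma norm_sum_qterm_D1_le:
  assumes N: "N > 0" and j: "1 \<le> j" "2 * j \<le> int N"
  shows "norm (\<Sum>l\<in>{0..j-1}. qterm m N j * D1 m N j l)
    \<le> \<bar>real_of_int m\<bar> * real_of_int j / 2 * \<bar>\<Sum>l\<in>{0..j-1}. (-1) ^ nat l * chord_prod N (j - l) (j + l)\<bar>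
      + (\<Sum>l\<in>{0..j-1}. \<bar>cot_sum N j l\<bar> * chord_prod N (j - l) (j + l))"
proof -
  let ?x = "\<lambda>l. (-1) ^ nat l * chord_prod N (j - l) (j + l)"
  let ?A = "real_of_int m * real_of_int j / 2 * (\<Sum>l\<in>{0..j-1}. ?x l)"
  let ?B = "\<Sum>l\<in>{0..j-1}. ?x l * cot_sum N j l"
  have "(\<Sum>l\<in>{0..j-1}. qterm m N j * D1 m N j l) = qterm m N j * (\<Sum>l\<in>{0..j-1}. D1 m N j l)"
    by (simp add: sum_distrib_left)
  also have "(\<Sum>l\<in>{0..j-1}. D1 m N j l)
      = (\<Sum>l\<in>{0..j-1}. \<i> * complex_of_real (real_of_int m * real_of_int j / 2 * ?x l)
          + complex_of_real (?x l * cot_sum N j l))"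
    by (intro sum.cong) (auto simp: D1_eq[OF N])
  also have "\<dots> = \<i> * complex_of_real ?A + complex_of_real ?B"
    by (simp add: sum.distrib sum_distrib_left)
  finally have eq: "(\<Sum>l\<in>{0..j-1}. qterm m N j * D1 m N j l)
      = qterm m N j * (\<i> * complex_of_real ?A + complex_of_real ?B)" .
  have "norm (qterm m N j) = 1"
    unfolding qterm_def by (simp add: norm_exp_eq_Re)
  then have "norm (\<Sum>l\<in>{0..j-1}. qterm m N j * D1 m N j l) \<le> \<bar>?A\<bar> + \<bar>?B\<bar>"
    using norm_triangle_ineq[of "\<i> * complex_of_real ?A" "complex_of_real ?B"]
    by (simp only: eq norm_mult norm_ii norm_of_real mult_1)
  moreover have "\<bar>?A\<bar> = \<bar>real_of_int m\<bar> * real_of_int j / 2 * \<bar>\<Sum>l\<in>{0..j-1}. ?x l\<bar>"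
    using j by (simp add: abs_mult)
  moreover have "\<bar>?B\<bar> \<le> (\<Sum>l\<in>{0..j-1}. \<bar>cot_sum N j l\<bar> * chord_prod N (j - l) (j + l))"
    using j by (intro sum_abs[THEN order_trans] sum_mono)
      (auto simp: abs_mult chord_prod_nonneg)
  ultimately show ?thesis by linarith
qed

lemma abs_cot_sum_le:
  assumes \<sigma>: "0 < \<sigma>" and l: "0 \<le> l"
    and sin_ge: "\<And>x. j - l \<le> x \<Longrightarrow> x \<le> j + l \<Longrightarrow> \<sigma> \<le> sin (real_of_int x * pi / real N)"
    and sin_2j: "\<bar>sin (real_of_int (2 * j) * pi / real N)\<bar> \<le> s"
  shows "\<bar>cot_sum N j l\<bar> \<le> 1 / \<sigma> + real_of_int l * (s / \<sigma>\<^sup>2)"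
proof -
  let ?S = "\<lambda>x::int. sin (real_of_int x * pi / real N)"
  have cot_bound: "\<bar>cot (real_of_int j * pi / real N)\<bar> \<le> 1 / \<sigma>"
  proof -
    have "\<sigma> \<le> ?S j" using l by (intro sin_ge) auto
    then have "\<bar>cos (real_of_int j * pi / real N)\<bar> / ?S j \<le> 1 / \<sigma>"
      using \<sigma> by (intro frac_le) auto
    then show ?thesis using \<sigma> \<open>\<sigma> \<le> ?S j\<close> by (simp add: cot_def abs_divide)
  qed
  have "\<bar>?S (2 * j) / (?S (j - k) * ?S (j + k))\<bar> \<le> s / \<sigma>\<^sup>2" if "k \<in> {1..l}" for k
  proof -
    have "\<sigma> \<le> ?S (j - k)" "\<sigma> \<le> ?S (j + k)" using that by (intro sin_ge; simp)+
    then have "\<sigma> * \<sigma> \<le> ?S (j - k) * ?S (j + k)" using \<sigma> by (intro mult_mono) auto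
    then have "\<bar>?S (2 * j)\<bar> / (?S (j - k) * ?S (j + k)) \<le> s / (\<sigma> * \<sigma>)"
      using \<sigma> sin_2j by (intro frac_le) auto
    moreover have "0 < ?S (j - k) * ?S (j + k)"
      using \<sigma> \<open>\<sigma> * \<sigma> \<le> _\<close> mult_pos_pos[OF \<sigma> \<sigma>] by linarith
    ultimately show ?thesis by (simp only: abs_divide abs_of_pos power2_eq_square)
  qed
  then have "\<bar>\<Sum>k\<in>{1..l}. ?S (2 * j) / (?S (j - k) * ?S (j + k))\<bar> \<le> (\<Sum>k\<in>{1..l}. s / \<sigma>\<^sup>2)"
    by (intro order_trans[OF sum_abs] sum_mono)
  also have "\<dots> = real_of_int l * (s / \<sigma>\<^sup>2)" using l by simp
  finally show ?thesis
    unfolding cot_sum_def using cot_bound abs_triangle_ineq[of "cot (real_of_int j * pi / real N)"]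
    by linarith
qed

section \<open>The peak \<open>F\<^sub>N\<close>\<close>

definition sixth :: "nat \<Rightarrow> int" where
  "sixth N = int (N div 6)"

definition five_sixths :: "nat \<Rightarrow> int" where
  "five_sixths N = int (5 * N div 6)"

lemma sixth_bounds: "real_of_int (sixth N) \<le> real N / 6" "real N / 6 < real_of_int (sixth N) + 1"
  unfolding sixth_def by linarith+

lemma five_sixths_bounds:
  "real_of_int (five_sixths N) \<le> 5 * real N / 6" "5 * real N / 6 < real_of_int (five_sixths N) + 1"
  unfolding five_sixths_def by linarith+

locale large_modulus =
  fixes N :: nat
  assumes twelve_le_N: "12 \<le> N"
begin

lemma N_pos: "N > 0"
  using twelve_le_N by simp

lemma FF_eq_chord_prod: "FF N = chord_prod N (sixth N) (five_sixths N)"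
proof -
  let ?f = "\<lambda>r::nat. 2 * sin (real r * pi / real N)"
  let ?A = "{1..N div 6 - 1}" and ?B = "{N div 6..5 * N div 6}"
  have N6: "2 \<le> N div 6" using twelve_le_N by simp
  have pos: "0 < prod ?f ?A"
  proof (rule prod_pos)
    fix r assume "r \<in> ?A"
    then have "0 < chord N (real r)" using N6 by (intro chord_pos) auto
    then show "0 < ?f r" by (simp add: chord_def)
  qed
  have "{1..5 * N div 6} = ?A \<union> ?B" using N6 by auto
  then have "prod ?f {1..5 * N div 6} = prod ?f ?A * prod ?f ?B"
    by (simp add: prod.union_disjoint)
  then have "FF N = prod ?f ?A * prod ?f ?B / prod ?f ?A"
    unfolding FF_def by simp
  also have "\<dots> = prod ?f ?B"
    by (rule nonzero_mult_div_cancel_left) (use pos in linarith)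
  also have "\<dots> = (\<Prod>n\<in>int ` ?B. chord N (real_of_int n))"
    by (subst prod.reindex) (auto simp: chord_def)
  also have "int ` ?B = {sixth N..five_sixths N}"
    unfolding sixth_def five_sixths_def by (simp add: image_int_atLeastAtMost)
  finally show ?thesis unfolding chord_prod_def .
qed

lemma chord_outside_peak:
  assumes "1 \<le> n" "n \<le> int N - 1" "n \<notin> {sixth N..five_sixths N}"
  shows "0 \<le> chord N (of_int n)" "chord N (of_int n) \<le> 1"
proof -
  show "0 \<le> chord N (of_int n)" using assms by (intro chord_nonneg) auto
  have "real_of_int n + 1 \<le> real_of_int (sixth N) \<or> real_of_int (five_sixths N) + 1 \<le> real_of_int n"
    using assms(3) by auto
  then have "real_of_int n \<le> real N / 6 \<or> 5 * real N / 6 \<le> real_of_int n"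
    using sixth_bounds[of N] five_sixths_bounds[of N] by linarith
  then show "chord N (of_int n) \<le> 1"
    using chord_le_one_sub[OF N_pos, of 0] assms by simp
qed

lemma chord_in_peak:
  assumes "n \<in> {sixth N..five_sixths N}"
  shows "1 / 2 \<le> chord N (of_int n)" and "n \<noteq> sixth N \<Longrightarrow> 1 \<le> chord N (of_int n)"
proof -
  show "1 / 2 \<le> chord N (of_int n)"
    using assms sixth_bounds[of N] five_sixths_bounds[of N] twelve_le_N
    by (intro half_le_chord[OF N_pos]) auto
  assume "n \<noteq> sixth N"
  then have "real N / 6 \<le> real_of_int n" "real_of_int n \<le> 5 * real N / 6"
    using assms sixth_bounds[of N] five_sixths_bounds[of N] by auto
  then show "1 \<le> chord N (of_int n)"
    using one_add_le_chord[OF N_pos, of 0] by simp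
qed

lemma FF_pos: "0 < FF N"
  unfolding FF_eq_chord_prod chord_prod_def
  by (rule prod_pos) (use chord_in_peak(1) in fastforce)

lemma prod_peak_diff_ge:
  assumes T: "T \<subseteq> {sixth N..five_sixths N} - {a..b}" "sixth N \<notin> T"
    and chord_T: "\<And>n. n \<in> T \<Longrightarrow> 1 + t \<le> chord N (of_int n)" and t: "0 \<le> t"
  shows "(1 + t) ^ card T / 2 \<le> (\<Prod>n\<in>{sixth N..five_sixths N} - {a..b}. chord N (of_int n))"
proof -
  let ?s = "\<lambda>n::int. chord N (of_int n)"
  let ?C = "{sixth N..five_sixths N} - {a..b} - T"
  have split: "prod ?s ({sixth N..five_sixths N} - {a..b}) = prod ?s ?C * prod ?s T"
    by (rule prod.subset_diff[OF T(1)]) simp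
  have "(\<Prod>n\<in>T. 1 + t) \<le> prod ?s T"
    using chord_T t by (intro prod_mono) auto
  then have pT: "(1 + t) ^ card T \<le> prod ?s T" by simp
  have ge1: "1 \<le> prod ?s (?C - {sixth N})"
    by (rule prod_ge_1) (use chord_in_peak(2) in auto)
  have pC: "1 / 2 \<le> prod ?s ?C"
  proof (cases "sixth N \<in> ?C")
    case True
    have "1 / 2 \<le> ?s (sixth N)" using True by (intro chord_in_peak(1)) auto
    then have "1 / 2 * 1 \<le> ?s (sixth N) * prod ?s (?C - {sixth N})"
      using ge1 by (intro mult_mono) auto
    then show ?thesis using prod.remove[of ?C "sixth N" ?s] True by simp
  next
    case False
    then show ?thesis using ge1 by simp
  qed
  have "(1 + t) ^ card T * (1 / 2) \<le> prod ?s T * prod ?s ?C"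
    using pT pC order_trans[OF zero_le_power pT] t by (intro mult_mono) auto
  then show ?thesis using split by (simp add: mult.commute)
qed

lemma prod_diff_peak_le:
  assumes ab: "1 \<le> a" "b \<le> int N - 1" and T: "T \<subseteq> {a..b} - {sixth N..five_sixths N}"
    and chord_T: "\<And>n. n \<in> T \<Longrightarrow> chord N (of_int n) \<le> 1 - t"
  shows "(\<Prod>n\<in>{a..b} - {sixth N..five_sixths N}. chord N (of_int n)) \<le> (1 - t) ^ card T"
proof -
  let ?s = "\<lambda>n::int. chord N (of_int n)"
  let ?C = "{a..b} - {sixth N..five_sixths N} - T"
  have split: "prod ?s ({a..b} - {sixth N..five_sixths N}) = prod ?s ?C * prod ?s T"
    by (rule prod.subset_diff[OF T]) simp
  have unit: "0 \<le> ?s n" "?s n \<le> 1" if "n \<in> {a..b} - {sixth N..five_sixths N}" for n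
    using chord_outside_peak ab that by auto
  have "prod ?s T \<le> (\<Prod>n\<in>T. 1 - t)"
    using chord_T unit T by (intro prod_mono) auto
  then have pT: "prod ?s T \<le> (1 - t) ^ card T" by simp
  have "prod ?s ?C \<le> 1" using unit by (intro prod_le_1) auto
  moreover have "0 \<le> prod ?s T" using unit T by (intro prod_nonneg) auto
  ultimately have "prod ?s T * prod ?s ?C \<le> prod ?s T"
    by (intro mult_left_le)
  then show ?thesis using split pT by (simp add: mult.commute)
qed

text \<open>The chords of \<open>[a,b]\<close> outside the peak are at most 1 and the chords of the peak missing
  from \<open>[a,b]\<close> are at least 1, except possibly the first one, which is at least \<open>1/2\<close>. On the
  blocks \<open>T\<close> and \<open>T'\<close> these estimates improve by a factor \<open>1 \<plusminus> t\<close>.\<close>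

lemma chord_prod_mult_le:
  assumes ab: "1 \<le> a" "b \<le> int N - 1"
    and T: "T \<subseteq> {sixth N..five_sixths N} - {a..b}" "sixth N \<notin> T"
    and chord_T: "\<And>n. n \<in> T \<Longrightarrow> 1 + t \<le> chord N (of_int n)"
    and T': "T' \<subseteq> {a..b} - {sixth N..five_sixths N}"
    and chord_T': "\<And>n. n \<in> T' \<Longrightarrow> chord N (of_int n) \<le> 1 - t"
    and t: "0 \<le> t"
  shows "chord_prod N a b * (1 + t) ^ card T \<le> 2 * FF N * (1 - t) ^ card T'"
proof -
  let ?Y = "\<Prod>n\<in>{sixth N..five_sixths N} - {a..b}. chord N (of_int n)"
  let ?X = "\<Prod>n\<in>{a..b} - {sixth N..five_sixths N}. chord N (of_int n)"
  have "0 \<le> chord_prod N a b" using ab by (intro chord_prod_nonneg) auto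
  then have "chord_prod N a b * ((1 + t) ^ card T / 2) \<le> chord_prod N a b * ?Y"
    by (intro mult_left_mono prod_peak_diff_ge[OF T chord_T t])
  also have "\<dots> = FF N * ?X"
    unfolding FF_eq_chord_prod by (rule chord_prod_mult_diff_eq)
  also have "\<dots> \<le> FF N * (1 - t) ^ card T'"
    using FF_pos by (intro mult_left_mono prod_diff_peak_le[OF ab T' chord_T']) auto
  finally show ?thesis by simp
qed

corollary chord_prod_le_two_FF:
  assumes "1 \<le> a" "b \<le> int N - 1" shows "chord_prod N a b \<le> 2 * FF N"
  using chord_prod_mult_le[OF assms, of "{}" 0 "{}"] by simp

lemma inverse_le_sin:
  assumes "1 \<le> x" "x \<le> real N - 1" shows "1 / real N \<le> sin (x * pi / real N)"
proof -
  define u where "u = pi / real N"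
  have u: "0 \<le> u" "u \<le> 1 / 3"
    unfolding u_def using twelve_le_N pi_less_4 by (auto simp: field_simps)
  have "sin u \<le> sin (x * pi / real N)"
  proof (rule sin_le_sin_between)
    show "u \<le> x * pi / real N" unfolding u_def using assms N_pos by (simp add: field_simps)
    have "x * pi / real N \<le> (real N - 1) * pi / real N"
      using assms by (intro divide_right_mono mult_right_mono) auto
    then show "x * pi / real N \<le> pi - u" unfolding u_def using N_pos by (simp add: field_simps)
  qed (use u in auto)
  moreover have "u * u \<le> (1 / 3) * (1 / 3)" using u by (intro mult_mono) auto
  then have "u * (u * u) \<le> u * (1 / 9)" using u by (intro mult_left_mono) auto
  then have "u ^ 3 \<le> u / 9" by (simp add: power3_eq_cube)
  moreover have "1 / real N \<le> u - u / 9 / 6"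
    unfolding u_def using pi_gt3 N_pos by (simp add: field_simps)
  ultimately show ?thesis using sin_ge_cubic[OF u(1)] by linarith
qed

end

section \<open>Exponential decay away from the window\<close>

text \<open>\<open>W\<close> is the width of the window around the peak \<open>(N/6, 5N/6)\<close>; in the end \<open>W = N\<^sup>\<alpha>\<close>.
  Removing or adding a block of \<open>\<lfloor>W/2\<rfloor>\<close> chords at distance \<open>\<ge> W/2\<close> from the edges of the
  peak costs a factor \<open>decay\<close>.\<close>

locale window =
  fixes N :: nat and W :: real
  assumes four_le_W: "4 \<le> W" and W_le: "W \<le> real N / 24"
begin

sublocale large_modulus
proof
  have "96 \<le> real N" using four_le_W W_le by linarith
  then show "12 \<le> N" by simp
qed

definition decay :: real where
  "decay = (1 + W / 2 * pi / real N) ^ nat \<lfloor>W / 2\<rfloor>"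

definition in_window :: "int \<Rightarrow> int \<Rightarrow> bool" where
  "in_window a b \<longleftrightarrow> \<bar>real_of_int a - real N / 6\<bar> \<le> W \<and> \<bar>real_of_int b - 5 * real N / 6\<bar> \<le> W"

lemma decay_angle_bounds: "0 \<le> W / 2 * pi / real N" "W / 2 * pi / real N \<le> 1 / 2"
proof -
  show "0 \<le> W / 2 * pi / real N" using four_le_W by simp
  have "W / 2 * pi / real N \<le> (real N / 48) * pi / real N"
    using W_le N_pos by (intro divide_right_mono mult_right_mono) auto
  also have "\<dots> = pi / 48" using N_pos by simp
  finally show "W / 2 * pi / real N \<le> 1 / 2" using pi_less_4 by linarith
qed

lemma decay_pos: "0 < decay"
  unfolding decay_def using decay_angle_bounds(1) by simp

definition tail_bound :: real where
  "tail_bound = 2 * FF N / decay"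

lemma tail_bound_nonneg: "0 \<le> tail_bound"
  unfolding tail_bound_def using FF_pos decay_pos by simp

context
  fixes a b :: int
  assumes ab: "1 \<le> a" "b \<le> int N - 1"
begin

lemma chord_prod_le_tail_bound_gap:
  fixes T :: "int set"
  assumes T: "\<And>n. n \<in> T \<Longrightarrow> real N / 6 + W / 2 \<le> n \<and> n \<le> 5 * real N / 6 - W / 2 \<and> n \<notin> {a..b}"
    and card_T: "card T = nat \<lfloor>W / 2\<rfloor>"
  shows "chord_prod N a b \<le> tail_bound"
proof -
  have "chord_prod N a b * (1 + W / 2 * pi / real N) ^ card T \<le> 2 * FF N * (1 - W / 2 * pi / real N) ^ card ({} :: int set)"
  proof (rule chord_prod_mult_le[OF ab])
    show "T \<subseteq> {sixth N..five_sixths N} - {a..b}" "sixth N \<notin> T"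
      using T sixth_bounds[of N] five_sixths_bounds[of N] four_le_W by force+
    show "1 + W / 2 * pi / real N \<le> chord N (of_int n)" if "n \<in> T" for n
      using T[OF that] decay_angle_bounds four_le_W by (intro one_add_le_chord[OF N_pos]) auto
  qed (use decay_angle_bounds in auto)
  then show ?thesis
    using decay_pos unfolding tail_bound_def decay_def card_T by (simp add: field_simps)
qed

lemma chord_prod_le_tail_bound_excess:
  fixes T :: "int set"
  assumes T: "\<And>n. n \<in> T \<Longrightarrow> n \<in> {a..b} \<and> (n \<le> real N / 6 - W / 2 \<or> 5 * real N / 6 + W / 2 \<le> n)"
    and card_T: "card T = nat \<lfloor>W / 2\<rfloor>"
  shows "chord_prod N a b \<le> tail_bound"
proof -
  let ?t = "W / 2 * pi / real N"
  have "chord_prod N a b * (1 + ?t) ^ card ({} :: int set) \<le> 2 * FF N * (1 - ?t) ^ card T"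
  proof (rule chord_prod_mult_le[OF ab])
    show "T \<subseteq> {a..b} - {sixth N..five_sixths N}"
      using T sixth_bounds[of N] five_sixths_bounds[of N] four_le_W by force
    show "chord N (of_int n) \<le> 1 - ?t" if "n \<in> T" for n
      using T[OF that] ab decay_angle_bounds four_le_W by (intro chord_le_one_sub[OF N_pos]) auto
  qed (use decay_angle_bounds in auto)
  also have "\<dots> \<le> 2 * FF N * (1 / (1 + ?t) ^ card T)"
    using FF_pos decay_angle_bounds
    by (intro mult_left_mono one_sub_power_le_inverse) linarith+
  finally show ?thesis unfolding tail_bound_def decay_def card_T by simp
qed

lemma chord_prod_le_tail_bound_if_late_start:
  assumes "real N / 6 + W < a" shows "chord_prod N a b \<le> tail_bound"
proof (rule chord_prod_le_tail_bound_gap)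
  define c where "c = \<lceil>real N / 6 + W / 2\<rceil>"
  show "card {c..c + \<lfloor>W / 2\<rfloor> - 1} = nat \<lfloor>W / 2\<rfloor>" by simp
  fix n assume "n \<in> {c..c + \<lfloor>W / 2\<rfloor> - 1}"
  then have "real_of_int c \<le> n" "n \<le> real_of_int c + real_of_int \<lfloor>W / 2\<rfloor> - 1"
    by (simp_all flip: of_int_le_iff)
  then have "real N / 6 + W / 2 \<le> n" "n < real N / 6 + W"
    unfolding c_def by linarith+
  then show "real N / 6 + W / 2 \<le> n \<and> n \<le> 5 * real N / 6 - W / 2 \<and> n \<notin> {a..b}"
    using assms W_le by auto
qed

lemma chord_prod_le_tail_bound_if_early_end:
  assumes "b < 5 * real N / 6 - W" shows "chord_prod N a b \<le> tail_bound"
proof (rule chord_prod_le_tail_bound_gap)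
  define e where "e = \<lfloor>5 * real N / 6 - W / 2\<rfloor>"
  show "card {e - \<lfloor>W / 2\<rfloor> + 1..e} = nat \<lfloor>W / 2\<rfloor>" by simp
  fix n assume "n \<in> {e - \<lfloor>W / 2\<rfloor> + 1..e}"
  then have "real_of_int e - real_of_int \<lfloor>W / 2\<rfloor> + 1 \<le> n" "n \<le> real_of_int e"
    by (simp_all flip: of_int_le_iff)
  then have "5 * real N / 6 - W < n" "n \<le> 5 * real N / 6 - W / 2"
    unfolding e_def by linarith+
  then show "real N / 6 + W / 2 \<le> n \<and> n \<le> 5 * real N / 6 - W / 2 \<and> n \<notin> {a..b}"
    using assms W_le by auto
qed

lemma chord_prod_le_tail_bound_if_early_start:
  assumes "a < real N / 6 - W" shows "chord_prod N a b \<le> tail_bound"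
proof (cases "a + \<lfloor>W / 2\<rfloor> - 1 \<le> b")
  case True
  show ?thesis
  proof (rule chord_prod_le_tail_bound_excess)
    show "card {a..a + \<lfloor>W / 2\<rfloor> - 1} = nat \<lfloor>W / 2\<rfloor>" by simp
    fix n assume n: "n \<in> {a..a + \<lfloor>W / 2\<rfloor> - 1}"
    then have "n \<le> real_of_int a + real_of_int \<lfloor>W / 2\<rfloor> - 1"
      by (simp flip: of_int_le_iff)
    then have "n \<le> real N / 6 - W / 2" using assms by linarith
    then show "n \<in> {a..b} \<and> (n \<le> real N / 6 - W / 2 \<or> 5 * real N / 6 + W / 2 \<le> n)"
      using n True by auto
  qed
next
  case False
  then have "real_of_int b < real_of_int a + real_of_int \<lfloor>W / 2\<rfloor> - 1"
    by (simp flip: of_int_less_iff)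
  then have "b < 5 * real N / 6 - W" using assms W_le by linarith
  then show ?thesis by (rule chord_prod_le_tail_bound_if_early_end)
qed

lemma chord_prod_le_tail_bound_if_late_end:
  assumes "5 * real N / 6 + W < b" shows "chord_prod N a b \<le> tail_bound"
proof (cases "a \<le> b - \<lfloor>W / 2\<rfloor> + 1")
  case True
  show ?thesis
  proof (rule chord_prod_le_tail_bound_excess)
    show "card {b - \<lfloor>W / 2\<rfloor> + 1..b} = nat \<lfloor>W / 2\<rfloor>" by simp
    fix n assume n: "n \<in> {b - \<lfloor>W / 2\<rfloor> + 1..b}"
    then have "real_of_int b - real_of_int \<lfloor>W / 2\<rfloor> + 1 \<le> n"
      by (simp flip: of_int_le_iff)
    then have "5 * real N / 6 + W / 2 \<le> n" using assms by linarith
    then show "n \<in> {a..b} \<and> (n \<le> real N / 6 - W / 2 \<or> 5 * real N / 6 + W / 2 \<le> n)"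
      using n True by auto
  qed
next
  case False
  then have "real_of_int b - real_of_int \<lfloor>W / 2\<rfloor> + 1 < real_of_int a"
    by (simp flip: of_int_less_iff)
  then have "real N / 6 + W < a" using assms W_le by linarith
  then show ?thesis by (rule chord_prod_le_tail_bound_if_late_start)
qed

lemma chord_prod_le_tail_bound_off_window:
  assumes "\<not> in_window a b" shows "chord_prod N a b \<le> tail_bound"
  using assms chord_prod_le_tail_bound_if_late_start chord_prod_le_tail_bound_if_early_end
    chord_prod_le_tail_bound_if_early_start chord_prod_le_tail_bound_if_late_end
  unfolding in_window_def by linarith

end

section \<open>Estimates inside the window\<close>

lemma second_difference_error_le:
  "9 * (2 * pi * (W + 1) / real N) ^ 2 + 16 * (2 * pi / real N) \<le> 70 * W / real N"
proof -
  define u where "u = W / real N"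
  have u: "0 \<le> u" "u \<le> 1 / 24"
    unfolding u_def using four_le_W W_le N_pos by (auto simp: field_simps)
  have "2 * pi * (W + 1) \<le> 8 * (W + 1)"
    using pi_less_4 four_le_W by (intro mult_right_mono) auto
  also have "8 * (W + 1) \<le> 10 * W" using four_le_W by simp
  finally have "2 * pi * (W + 1) / real N \<le> 10 * u"
    unfolding u_def by (simp add: divide_right_mono)
  then have "(2 * pi * (W + 1) / real N) ^ 2 \<le> (10 * u) ^ 2"
    using four_le_W by (intro power_mono) auto
  moreover have "u * u \<le> u * (1 / 24)" using u by (intro mult_left_mono) auto
  moreover have "2 * pi / real N \<le> 2 * u"
    unfolding u_def using pi_less_4 four_le_W by (simp add: divide_right_mono)
  moreover have "(10 * u) ^ 2 = 100 * (u * u)" by (simp add: power2_eq_square)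
  moreover have "70 * W / real N = 70 * u" unfolding u_def by simp
  ultimately show ?thesis using u by linarith
qed

lemma chord_second_difference_factor_le_window:
  fixes x y :: real
  defines "r1 \<equiv> chord N (x - 1) * chord N (y + 1)" and "r2 \<equiv> chord N (x - 2) * chord N (y + 2)"
  assumes x: "\<bar>x - real N / 6\<bar> \<le> W" and y: "\<bar>y - 5 * real N / 6\<bar> \<le> W"
  shows "\<bar>1 - 2 * r1 + r1 * r2\<bar> \<le> 70 * W / real N"
proof -
  define e where "e = 2 * pi * (W + 1) / real N"
  define h where "h = 2 * pi / real N"
  have "\<bar>chord N (real N / 6) - chord N (x - 1)\<bar> \<le> 2 * pi * \<bar>real N / 6 - (x - 1)\<bar> / real N"
    and "\<bar>chord N (5 * real N / 6) - chord N (y + 1)\<bar> \<le> 2 * pi * \<bar>5 * real N / 6 - (y + 1)\<bar> / real N"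
    by (rule chord_lipschitz[OF N_pos])+
  moreover have "2 * pi * \<bar>real N / 6 - (x - 1)\<bar> / real N \<le> e"
    and "2 * pi * \<bar>5 * real N / 6 - (y + 1)\<bar> / real N \<le> e"
    unfolding e_def using x y by (intro divide_right_mono mult_left_mono; simp)+
  ultimately have "\<bar>1 - chord N (x - 1)\<bar> \<le> e" "\<bar>1 - chord N (y + 1)\<bar> \<le> e"
    using chord_sixth[OF N_pos] chord_five_sixths[OF N_pos] by simp_all
  moreover have "\<bar>chord N (x - 2) - chord N (x - 1)\<bar> \<le> h" "\<bar>chord N (y + 2) - chord N (y + 1)\<bar> \<le> h"
    using chord_lipschitz[OF N_pos, of "x - 2" "x - 1"] chord_lipschitz[OF N_pos, of "y + 2" "y + 1"]
    unfolding h_def by simp_all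
  ultimately have "\<bar>1 - 2 * r1 + r1 * r2\<bar> \<le> 9 * e ^ 2 + 16 * h"
    unfolding r1_def r2_def by (intro abs_second_difference_factor_le abs_chord_le)
  also have "\<dots> \<le> 70 * W / real N"
    unfolding e_def h_def by (rule second_difference_error_le)
  finally show ?thesis .
qed

lemma in_window_bounds: assumes "in_window a b" shows "3 \<le> a" "a + 4 \<le> b"
proof -
  have "96 \<le> real N" using four_le_W W_le by linarith
  then show "3 \<le> a" "a + 4 \<le> b"
    using assms W_le unfolding in_window_def by linarith+
qed

lemma abs_chord_prod_second_difference_le:
  assumes "1 \<le> a" "b \<le> int N - 1" "a \<le> b + 1"
  shows "\<bar>chord_prod N a b - 2 * chord_prod N (a - 1) (b + 1) + chord_prod N (a - 2) (b + 2)\<bar>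
    \<le> (if in_window a b then 140 * W / real N * FF N else 145 * tail_bound)"
proof -
  let ?r1 = "chord N (of_int a - 1) * chord N (of_int b + 1)"
    and ?r2 = "chord N (of_int a - 2) * chord N (of_int b + 2)"
  have P: "0 \<le> chord_prod N a b" "chord_prod N a b \<le> 2 * FF N"
    using assms by (auto intro: chord_prod_nonneg chord_prod_le_two_FF)
  have eq: "\<bar>chord_prod N a b - 2 * chord_prod N (a - 1) (b + 1) + chord_prod N (a - 2) (b + 2)\<bar>
      = chord_prod N a b * \<bar>1 - 2 * ?r1 + ?r1 * ?r2\<bar>"
    using P unfolding chord_prod_second_difference_eq[OF assms(3)] by (simp add: abs_mult)
  show ?thesis
  proof (cases "in_window a b")
    case True
    then have "\<bar>1 - 2 * ?r1 + ?r1 * ?r2\<bar> \<le> 70 * W / real N"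
      unfolding in_window_def by (intro chord_second_difference_factor_le_window) auto
    then have "chord_prod N a b * \<bar>1 - 2 * ?r1 + ?r1 * ?r2\<bar> \<le> 2 * FF N * (70 * W / real N)"
      using P by (intro mult_mono) auto
    then show ?thesis using True eq by (simp add: mult_ac)
  next
    case False
    then have "chord_prod N a b \<le> tail_bound"
      using assms by (intro chord_prod_le_tail_bound_off_window) auto
    then have "chord_prod N a b * \<bar>1 - 2 * ?r1 + ?r1 * ?r2\<bar> \<le> tail_bound * 145"
      using P chord_second_difference_factor_le by (intro mult_mono) auto
    then show ?thesis using False eq by simp
  qed
qed

definition window_count :: "int \<Rightarrow> nat" where
  "window_count j = card {l. l < nat j \<and> in_window (j - int l) (j + int l)}"

context
  fixes j :: int
  assumes j: "1 \<le> j" "2 * j \<le> int N - 2"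
begin

lemma diagonal_chord_prod_bounds:
  assumes "0 \<le> l" "l < j"
  shows "0 \<le> chord_prod N (j - l) (j + l)" "chord_prod N (j - l) (j + l) \<le> 2 * FF N"
    and "\<not> in_window (j - l) (j + l) \<Longrightarrow> chord_prod N (j - l) (j + l) \<le> tail_bound"
proof -
  have "1 \<le> j - l" "j + l \<le> int N - 1" using assms j by auto
  then show "0 \<le> chord_prod N (j - l) (j + l)" "chord_prod N (j - l) (j + l) \<le> 2 * FF N"
    and "\<not> in_window (j - l) (j + l) \<Longrightarrow> chord_prod N (j - l) (j + l) \<le> tail_bound"
    by (simp_all add: chord_prod_nonneg chord_prod_le_two_FF chord_prod_le_tail_bound_off_window)
qed

lemma diagonal_chord_prod_le_tail_bound_at_ends:
  assumes "l < nat j" "l \<le> 1 \<or> nat j \<le> l + 2"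
  shows "chord_prod N (j - int l) (j + int l) \<le> tail_bound"
proof -
  have "\<not> in_window (j - int l) (j + int l)"
    using assms in_window_bounds[of "j - int l" "j + int l"] by auto
  then show ?thesis using assms diagonal_chord_prod_bounds[of "int l"] by simp
qed

lemma abs_alternating_diagonal_sum_le:
  "\<bar>\<Sum>l\<in>{0..j-1}. (-1) ^ nat l * chord_prod N (j - l) (j + l)\<bar>
    \<le> 140 * W / real N * FF N * real (window_count j) + 149 * real N * tail_bound"
proof -
  define x where "x l = chord_prod N (j - int l) (j + int l)" for l :: nat
  have boundary: "\<bar>x l\<bar> \<le> tail_bound" if "l < nat j" "l \<le> 1 \<or> nat j \<le> l + 2" for l
    using that diagonal_chord_prod_bounds[of "int l"] diagonal_chord_prod_le_tail_bound_at_ends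
    unfolding x_def by simp
  have step: "\<bar>x l - 2 * x (Suc l) + x (Suc (Suc l))\<bar>
      \<le> (if in_window (j - int l) (j + int l) then 140 * W / real N * FF N else 145 * tail_bound)"
    if "l < nat j - 2" for l
  proof -
    have "x (Suc l) = chord_prod N (j - int l - 1) (j + int l + 1)"
      and "x (Suc (Suc l)) = chord_prod N (j - int l - 2) (j + int l + 2)"
      unfolding x_def by (simp_all add: algebra_simps)
    moreover have "1 \<le> j - int l" "j + int l \<le> int N - 1" using that j by auto
    ultimately show ?thesis
      using abs_chord_prod_second_difference_le[of "j - int l" "j + int l"] unfolding x_def by simp
  qed
  have "\<bar>\<Sum>l\<in>{0..j-1}. (-1) ^ nat l * chord_prod N (j - l) (j + l)\<bar> = \<bar>\<Sum>l<nat j. (-1) ^ l * x l\<bar>"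
    unfolding x_def using j by (simp add: sum_int_atLeastAtMost_eq_sum_lessThan)
  also have "\<dots> \<le> 4 * tail_bound + (\<Sum>l<nat j - 2. \<bar>x l - 2 * x (Suc l) + x (Suc (Suc l))\<bar>)"
    by (rule abs_alternating_sum_le[OF boundary tail_bound_nonneg])
  also have "(\<Sum>l<nat j - 2. \<bar>x l - 2 * x (Suc l) + x (Suc (Suc l))\<bar>)
      \<le> (\<Sum>l<nat j - 2. if in_window (j - int l) (j + int l) then 140 * W / real N * FF N else 145 * tail_bound)"
    by (rule sum_mono) (rule step, simp)
  also have "\<dots> \<le> (\<Sum>l<nat j. if in_window (j - int l) (j + int l) then 140 * W / real N * FF N else 145 * tail_bound)"
    using tail_bound_nonneg FF_pos four_le_W by (intro sum_mono2) auto
  also have "\<dots> \<le> 140 * W / real N * FF N * real (window_count j) + 145 * tail_bound * real (nat j)"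
    unfolding window_count_def using tail_bound_nonneg by (intro sum_if_le_card) simp
  also have "4 * tail_bound + \<dots> \<le> 140 * W / real N * FF N * real (window_count j) + 149 * real N * tail_bound"
  proof -
    have "real (nat j) \<le> real N" "1 \<le> real N" using j by auto
    then have "145 * tail_bound * real (nat j) \<le> 145 * tail_bound * real N" "4 * tail_bound * 1 \<le> 4 * tail_bound * real N"
      using tail_bound_nonneg by (intro mult_left_mono; simp)+
    then show ?thesis by (simp add: algebra_simps)
  qed
  finally show ?thesis by simp
qed

lemma abs_cot_sum_le_crude:
  assumes l: "0 \<le> l" "l < j" shows "\<bar>cot_sum N j l\<bar> \<le> 2 * real N ^ 3"
proof -
  have "\<bar>cot_sum N j l\<bar> \<le> 1 / (1 / real N) + real_of_int l * (1 / (1 / real N)\<^sup>2)"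
  proof (rule abs_cot_sum_le)
    show "1 / real N \<le> sin (real_of_int x * pi / real N)" if "j - l \<le> x" "x \<le> j + l" for x
      using that l j by (intro inverse_le_sin) auto
  qed (use l N_pos in auto)
  also have "\<dots> = real N + real_of_int l * real N ^ 2"
    by (simp add: power_divide)
  also have "\<dots> \<le> real N + real N * real N ^ 2"
    using l j by (intro add_left_mono mult_right_mono) auto
  also have "\<dots> \<le> 2 * real N ^ 3"
  proof -
    have "real N * 1 \<le> real N * real N ^ 2"
      using twelve_le_N by (intro mult_left_mono one_le_power) auto
    then show ?thesis by (simp add: power2_eq_square power3_eq_cube)
  qed
  finally show ?thesis .
qed

lemma abs_cot_sum_le_in_window:
  assumes l: "0 \<le> l" "l < j" and w: "in_window (j - l) (j + l)"
  shows "\<bar>cot_sum N j l\<bar> \<le> 129 * W"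
proof -
  have w': "real N / 6 - W \<le> j - l" "5 * real N / 6 - W \<le> j + l" "j + l \<le> 5 * real N / 6 + W"
    using w unfolding in_window_def by auto
  have "\<bar>sin (real_of_int (2 * j) * pi / real N)\<bar> \<le> 2 * W * pi / real N"
  proof -
    have "sin (real_of_int (2 * j) * pi / real N) = sin ((real N - 2 * j) * pi / real N)"
      using sin_pi_minus[of "real_of_int (2 * j) * pi / real N"] N_pos
      by (simp add: field_simps)
    also have "\<bar>\<dots>\<bar> \<le> (real N - 2 * j) * pi / real N"
      using abs_sin_x_le_abs_x[of "(real N - 2 * j) * pi / real N"] j by simp
    also have "\<dots> \<le> 2 * W * pi / real N"
      using w' by (intro divide_right_mono mult_right_mono) auto
    finally show ?thesis .
  qed
  then have "\<bar>cot_sum N j l\<bar> \<le> 1 / (1 / 4) + real_of_int l * ((2 * W * pi / real N) / (1 / 4)\<^sup>2)"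
  proof (intro abs_cot_sum_le)
    show "1 / 4 \<le> sin (real_of_int x * pi / real N)" if "j - l \<le> x" "x \<le> j + l" for x
      using half_le_chord[OF N_pos, of x] that w' W_le unfolding chord_def by simp
  qed (use l in auto)
  also have "\<dots> = 4 + real_of_int l * (32 * pi * W / real N)"
    by (simp add: power2_eq_square)
  also have "\<dots> \<le> 4 + real N * (32 * pi * W / real N)"
    using l j four_le_W by (intro add_left_mono mult_right_mono) auto
  also have "\<dots> = 4 + 32 * pi * W"
    using N_pos by simp
  also have "\<dots> \<le> 129 * W"
  proof -
    have "32 * pi * W \<le> 32 * 4 * W"
      using four_le_W pi_less_4 by (intro mult_right_mono) auto
    then show ?thesis using four_le_W by linarith
  qed
  finally show ?thesis .
qed

lemma sum_abs_cot_sum_diagonal_le: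
  "(\<Sum>l\<in>{0..j-1}. \<bar>cot_sum N j l\<bar> * chord_prod N (j - l) (j + l))
    \<le> 258 * W * FF N * real (window_count j) + 2 * real N ^ 4 * tail_bound"
proof -
  have summand: "\<bar>cot_sum N j (int l)\<bar> * chord_prod N (j - int l) (j + int l)
      \<le> (if in_window (j - int l) (j + int l) then 258 * W * FF N else 2 * real N ^ 3 * tail_bound)"
    if "l < nat j" for l
  proof (cases "in_window (j - int l) (j + int l)")
    case True
    have "\<bar>cot_sum N j (int l)\<bar> * chord_prod N (j - int l) (j + int l) \<le> (129 * W) * (2 * FF N)"
      using that True j four_le_W
      by (intro mult_mono abs_cot_sum_le_in_window diagonal_chord_prod_bounds) auto
    then show ?thesis using True by simp
  next
    case False
    have "\<bar>cot_sum N j (int l)\<bar> * chord_prod N (j - int l) (j + int l) \<le> (2 * real N ^ 3) * tail_bound"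
      using that False j
      by (intro mult_mono abs_cot_sum_le_crude diagonal_chord_prod_bounds) auto
    then show ?thesis using False by simp
  qed
  have "(\<Sum>l\<in>{0..j-1}. \<bar>cot_sum N j l\<bar> * chord_prod N (j - l) (j + l))
      = (\<Sum>l<nat j. \<bar>cot_sum N j (int l)\<bar> * chord_prod N (j - int l) (j + int l))"
    using j by (simp add: sum_int_atLeastAtMost_eq_sum_lessThan)
  also have "\<dots> \<le> (\<Sum>l<nat j. if in_window (j - int l) (j + int l) then 258 * W * FF N
      else 2 * real N ^ 3 * tail_bound)"
    by (rule sum_mono) (rule summand, simp)
  also have "\<dots> \<le> 258 * W * FF N * real (window_count j) + 2 * real N ^ 3 * tail_bound * real (nat j)"
    unfolding window_count_def using tail_bound_nonneg by (intro sum_if_le_card) simp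
  also have "2 * real N ^ 3 * tail_bound * real (nat j) \<le> 2 * real N ^ 3 * tail_bound * real N"
    using j tail_bound_nonneg by (intro mult_left_mono) auto
  also have "2 * real N ^ 3 * tail_bound * real N = 2 * real N ^ 4 * tail_bound"
    by (simp add: eval_nat_numeral)
  finally show ?thesis by simp
qed

lemma norm_sum_qterm_D1_le_window:
  "norm (\<Sum>l\<in>{0..j-1}. qterm m N j * D1 m N j l)
    \<le> (\<bar>real_of_int m\<bar> + 1) * (258 * W * FF N * real (window_count j) + 151 * real N ^ 4 * tail_bound)"
proof -
  let ?A = "W * FF N * real (window_count j)" and ?t = tail_bound and ?m = "\<bar>real_of_int m\<bar>"
  have A: "0 \<le> ?A" using four_le_W FF_pos by simp
  have t: "0 \<le> ?t" by (rule tail_bound_nonneg)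
  have "?m * real_of_int j / 2 * \<bar>\<Sum>l\<in>{0..j-1}. (-1) ^ nat l * chord_prod N (j - l) (j + l)\<bar>
      \<le> ?m * real N * (140 * W / real N * FF N * real (window_count j) + 149 * real N * ?t)"
  proof (rule mult_mono)
    have "real_of_int j / 2 \<le> real N" using j by simp
    then show "?m * real_of_int j / 2 \<le> ?m * real N"
      using mult_left_mono[of "real_of_int j / 2" "real N" ?m] by simp
  qed (use j abs_alternating_diagonal_sum_le in auto)
  also have "\<dots> = ?m * (140 * ?A + 149 * (real N ^ 2 * ?t))"
    using N_pos by (simp add: field_simps power2_eq_square)
  also have "\<dots> \<le> ?m * (258 * ?A + 151 * (real N ^ 4 * ?t))"
  proof -
    have "real N ^ 2 * ?t \<le> real N ^ 4 * ?t"
      using twelve_le_N t by (intro mult_right_mono power_increasing) auto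
    then have "140 * ?A + 149 * (real N ^ 2 * ?t) \<le> 258 * ?A + 151 * (real N ^ 4 * ?t)"
      using A t zero_le_power[of "real N" 2] mult_nonneg_nonneg[of "real N ^ 2" ?t] by linarith
    then show ?thesis by (rule mult_left_mono) simp
  qed
  finally have U: "?m * real_of_int j / 2 * \<bar>\<Sum>l\<in>{0..j-1}. (-1) ^ nat l * chord_prod N (j - l) (j + l)\<bar>
      \<le> ?m * (258 * ?A + 151 * (real N ^ 4 * ?t))" .
  have V: "(\<Sum>l\<in>{0..j-1}. \<bar>cot_sum N j l\<bar> * chord_prod N (j - l) (j + l))
      \<le> 258 * ?A + 151 * (real N ^ 4 * ?t)"
  proof -
    have "258 * W * FF N * real (window_count j) = 258 * ?A" "2 * real N ^ 4 * ?t = 2 * (real N ^ 4 * ?t)"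
      by (simp_all add: mult_ac)
    moreover have "0 \<le> real N ^ 4 * ?t" using t by simp
    ultimately show ?thesis using sum_abs_cot_sum_diagonal_le by linarith
  qed
  show ?thesis
    using norm_sum_qterm_D1_le[OF N_pos j(1), of m] j U V by (simp add: algebra_simps)
qed

end

lemma window_count_le: "real (window_count j) \<le> 2 * W + 1"
proof -
  have "window_count j = card (int ` {l. l < nat j \<and> in_window (j - int l) (j + int l)})"
    unfolding window_count_def by (simp add: card_image)
  also have "real \<dots> \<le> 2 * W + 1"
    by (rule card_int_set_le[where x = "real_of_int j - real N / 6 - W"])
      (use four_le_W in \<open>auto simp: in_window_def\<close>)
  finally show ?thesis .
qed

lemma window_count_eq_0:
  assumes "2 * W < \<bar>2 * real_of_int j - real N\<bar>" shows "window_count j = 0"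
  using assms unfolding window_count_def in_window_def by auto

lemma sum_window_count_le:
  assumes "finite J" shows "(\<Sum>j\<in>J. real (window_count j)) \<le> (2 * W + 1)\<^sup>2"
proof -
  let ?C = "{j\<in>J. \<bar>2 * real_of_int j - real N\<bar> \<le> 2 * W}"
  have "(\<Sum>j\<in>J. real (window_count j)) = (\<Sum>j\<in>?C. real (window_count j))"
    using assms window_count_eq_0 by (intro sum.mono_neutral_right) (auto simp: not_le)
  also have "\<dots> \<le> real (card ?C) * (2 * W + 1)"
    using sum_mono[of ?C "\<lambda>j. real (window_count j)" "\<lambda>_. 2 * W + 1"] window_count_le by simp
  also have "\<dots> \<le> (2 * W + 1) * (2 * W + 1)"
  proof (rule mult_right_mono)
    show "real (card ?C) \<le> 2 * W + 1"
      by (rule card_int_set_le[where x = "real N / 2 - W"]) (use four_le_W in auto)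
  qed (use four_le_W in simp)
  finally show ?thesis by (simp add: power2_eq_square)
qed

lemma pow5_mult_tail_bound_le:
  assumes "2 * real N ^ 5 \<le> decay" shows "real N ^ 5 * tail_bound \<le> FF N"
proof -
  have "2 * real N ^ 5 * FF N \<le> decay * FF N"
    using assms FF_pos by (intro mult_right_mono) auto
  then show ?thesis
    unfolding tail_bound_def using decay_pos by (simp add: field_simps)
qed

lemma norm_Ssum_le:
  assumes decay_ge: "2 * real N ^ 5 \<le> decay"
  shows "norm (Ssum m N) \<le> 2500 * (\<bar>real_of_int m\<bar> + 1) * W ^ 3 * FF N"
proof -
  define J where "J = {j::int. 1 \<le> j \<and> real_of_int j \<le> real N / 2 - 1 \<and> even (int N - j + 1)}"
  have J: "1 \<le> j" "2 * j \<le> int N - 2" if "j \<in> J" for j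
    using that unfolding J_def by auto
  have "J \<subseteq> {1..int N}" unfolding J_def by auto
  then have fin: "finite J" and card: "real (card J) \<le> real N"
    using finite_subset card_mono[of "{1..int N}" J] by auto
  let ?m = "\<bar>real_of_int m\<bar> + 1" and ?t = tail_bound
  have "norm (Ssum m N) \<le> (\<Sum>j\<in>J. norm (\<Sum>l\<in>{0..j-1}. qterm m N j * D1 m N j l))"
    unfolding Ssum_def J_def[symmetric] by (rule norm_sum)
  also have "\<dots> \<le> (\<Sum>j\<in>J. ?m * (258 * W * FF N * real (window_count j) + 151 * real N ^ 4 * ?t))"
    using J by (intro sum_mono norm_sum_qterm_D1_le_window)
  also have "\<dots> = ?m * (258 * W * FF N * (\<Sum>j\<in>J. real (window_count j)) + 151 * real N ^ 4 * ?t * real (card J))"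
    by (simp add: sum.distrib flip: sum_distrib_left)
  also have "\<dots> \<le> ?m * (258 * W * FF N * (9 * W\<^sup>2) + 151 * real N ^ 4 * ?t * real N)"
  proof -
    have "(2 * W + 1)\<^sup>2 \<le> (3 * W)\<^sup>2" using four_le_W by (intro power_mono) auto
    then have "(\<Sum>j\<in>J. real (window_count j)) \<le> 9 * W\<^sup>2"
      using sum_window_count_le[OF fin] by (simp add: power_mult_distrib)
    then show ?thesis
      using card FF_pos four_le_W tail_bound_nonneg
      by (intro mult_left_mono add_mono mult_right_mono) auto
  qed
  also have "\<dots> \<le> ?m * (2322 * W ^ 3 * FF N + 151 * W ^ 3 * FF N)"
  proof -
    have "real N ^ 5 * ?t \<le> FF N" by (rule pow5_mult_tail_bound_le[OF decay_ge])
    also have "\<dots> \<le> W ^ 3 * FF N"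
      using mult_right_mono[of 1 "W ^ 3" "FF N"] one_le_power[of W 3] four_le_W FF_pos by simp
    finally have "151 * real N ^ 4 * ?t * real N \<le> 151 * W ^ 3 * FF N"
      by (simp add: eval_nat_numeral mult_ac)
    then show ?thesis
      by (intro mult_left_mono) (simp_all add: power2_eq_square power3_eq_cube mult_ac)
  qed
  also have "\<dots> \<le> 2500 * ?m * W ^ 3 * FF N"
    using four_le_W FF_pos by (simp add: algebra_simps)
  finally show ?thesis .
qed

lemma exp_le_decay: "exp ((W / 2 - 1) * (W / 2 * pi / real N) / 2) \<le> decay"
proof -
  let ?t = "W / 2 * pi / real N" and ?K = "nat \<lfloor>W / 2\<rfloor>"
  have t: "0 \<le> ?t" "?t \<le> 1 / 2" by (rule decay_angle_bounds)+
  have "?t / 2 \<le> ln (1 + ?t)"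
  proof -
    have "?t - ?t\<^sup>2 \<le> ln (1 + ?t)" by (rule ln_one_plus_pos_lower_bound) (use t in linarith)+
    moreover have "?t * ?t \<le> ?t * (1 / 2)" using t by (intro mult_left_mono) auto
    ultimately show ?thesis by (simp add: power2_eq_square)
  qed
  moreover have "W / 2 - 1 \<le> real ?K" "0 \<le> W / 2 - 1" using four_le_W by linarith+
  ultimately have "(W / 2 - 1) * (?t / 2) \<le> real ?K * ln (1 + ?t)"
    using t by (intro mult_mono) auto
  then have "exp ((W / 2 - 1) * ?t / 2) \<le> exp (real ?K * ln (1 + ?t))" by simp
  also have "\<dots> = decay"
    unfolding decay_def using t by (simp add: exp_of_nat_mult)
  finally show ?thesis .
qed

end

theorem proposition4p2:
  fixes m :: int and \<alpha> :: real
  assumes "1/2 < \<alpha>" and "\<alpha> < 2/3"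
  shows "(\<lambda>N. Ssum m N) \<in> O[at_top](\<lambda>N. complex_of_real (real N powr (3 * \<alpha>) * FF N))"
proof (rule bigoI)
  let ?W = "\<lambda>N::nat. real N powr \<alpha>"
  have "eventually (\<lambda>N. 4 \<le> ?W N \<and> ?W N \<le> real N / 24
      \<and> 2 * real N ^ 5 \<le> exp ((?W N / 2 - 1) * (?W N / 2 * pi / real N) / 2)) at_top"
    using assms by (intro eventually_conj; real_asymp)
  then show "eventually (\<lambda>N. norm (Ssum m N)
      \<le> 2500 * (\<bar>real_of_int m\<bar> + 1) * norm (complex_of_real (real N powr (3 * \<alpha>) * FF N))) at_top"
  proof (rule eventually_mono, elim conjE)
    fix N :: nat
    assume "4 \<le> ?W N" "?W N \<le> real N / 24"
      and decay_ge: "2 * real N ^ 5 \<le> exp ((?W N / 2 - 1) * (?W N / 2 * pi / real N) / 2)"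
    then interpret window N "?W N" by unfold_locales
    have "norm (Ssum m N) \<le> 2500 * (\<bar>real_of_int m\<bar> + 1) * ?W N ^ 3 * FF N"
      using decay_ge exp_le_decay by (intro norm_Ssum_le) linarith
    moreover have "?W N ^ 3 * FF N = norm (complex_of_real (real N powr (3 * \<alpha>) * FF N))"
      using N_pos FF_pos by (simp add: powr_power norm_mult)
    ultimately show "norm (Ssum m N) \<le> 2500 * (\<bar>real_of_int m\<bar> + 1) * norm (complex_of_real (real N powr (3 * \<alpha>) * FF N))"
      by (metis mult.assoc)
  qed
qed

end
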